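(* Let $G$ be the final graph of the uncoordinated construction (described in the context) on a set $P\subset\mathbb{R}^d$ of $n$ points with parameter $s>1$, and let $\alpha$ be the aspect ratio of $P$. Then the total Euclidean length of the edges of $G$ is $O(\lg\alpha\cdot|\mathrm{MST}|\cdot s^{d+1})$, where $|\mathrm{MST}|$ is the total length of a Euclidean minimum spanning tree of $P$ and the implied constant depends only on $d$.
   Context: Fix $d\ge 1$; $|xy|$ is Euclidean distance; $\lg$ is logarithm base 2. The aspect ratio is $\alpha=\max_{u,v\in P}|uv|/\min_{u\ne v\in P}|uv|$. Uncoordinated construction: start with the graph $G$ on vertex set $P$ with no edges. Every ordered pair $(p,q)$ of distinct points of $P$ is processed exactly once, in an arbitrary order, one at a time. When $(p,q)$ is processed, the edge $pq$ is added to $G$ unless $G$ currently contains an edge whose endpoints can be labeled $p',q'$ with $|pp'|\le |p'q'|/(2s+2)$ and $|qq'|\le |p'q'|/(2s+2)$. $G$ is the graph after all pairs are processed. *)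

theory Defs
  imports "HOL-Analysis.Analysis"
begin

text \<open>Edges are unordered pairs, represented as doubleton sets.\<close>

definition blocked :: "real \<Rightarrow> 'a::euclidean_space set set \<Rightarrow> 'a \<Rightarrow> 'a \<Rightarrow> bool" where
  "blocked s E p q \<longleftrightarrow> (\<exists>p' q'. {p', q'} \<in> E \<and>
      dist p p' \<le> dist p' q' / (2 * s + 2) \<and> dist q q' \<le> dist p' q' / (2 * s + 2))"

definition process_pair :: "real \<Rightarrow> 'a::euclidean_space set set \<Rightarrow> 'a \<times> 'a \<Rightarrow> 'a set set" where
  "process_pair s E pq = (if blocked s E (fst pq) (snd pq) then E else insert {fst pq, snd pq} E)"

definition uncoord_graph :: "real \<Rightarrow> ('a::euclidean_space \<times> 'a) list \<Rightarrow> 'a set set" where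
  "uncoord_graph s ord = foldl (process_pair s) {} ord"

definition valid_order :: "'a set \<Rightarrow> ('a \<times> 'a) list \<Rightarrow> bool" where
  "valid_order P ord \<longleftrightarrow> distinct ord \<and> set ord = {(p, q). p \<in> P \<and> q \<in> P \<and> p \<noteq> q}"

definition total_length :: "'a::euclidean_space set set \<Rightarrow> real" where
  "total_length E = (\<Sum>e\<in>E. diameter e)"

definition spanning_tree :: "'a set \<Rightarrow> 'a set set \<Rightarrow> bool" where
  "spanning_tree P T \<longleftrightarrow>
     T \<subseteq> {{u, v} | u v. u \<in> P \<and> v \<in> P \<and> u \<noteq> v} \<and>
     card T = card P - 1 \<and>
     (\<forall>u\<in>P. \<forall>v\<in>P. (u, v) \<in> {(x, y). {x, y} \<in> T}\<^sup>*)"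

definition mst_weight :: "'a::euclidean_space set \<Rightarrow> real" where
  "mst_weight P = Inf {total_length T | T. spanning_tree P T}"

definition aspect_ratio :: "'a::euclidean_space set \<Rightarrow> real" where
  "aspect_ratio P = Max {dist u v | u v. u \<in> P \<and> v \<in> P} /
                    Min {dist u v | u v. u \<in> P \<and> v \<in> P \<and> u \<noteq> v}"

end

theory Submission
  imports Defs
begin

text \<open>Fix a dyadic scale L and an L/(4s+4)-net N of P. Map each endpoint of an edge of G of length
in [L, 2L) to a net point within that distance. Two distinct edges with the same image would each satisfy the
blocking condition with respect to the other, which the construction rules out (whichever was
inserted later would have been blocked). So these edges inject into pairs of net points at distance
O(L), and a volume packing argument gives at most |N| (37s)^d of them. As every net point has another
net point at distance at least the separation r, a spanning tree must carry length at least r/2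
inside the ball of radius r/2 around each net point; these balls are disjoint, so the tree has
length \<Omega>(|N| r). Hence the edges of G at scale L have total length O(s^(d+1) |MST|), and there
are O(lg \<alpha>) scales.\<close>

lemma diameter_doubleton: "diameter {x, y} = dist x (y::'a::metric_space)"
proof (rule antisym)
  show "diameter {x, y} \<le> dist x y"
    by (auto simp: diameter_def dist_commute intro!: cSup_least)
  show "dist x y \<le> diameter {x, y}"
    by (rule diameter_bounded_bound) auto
qed

definition doubletons :: "'a set \<Rightarrow> 'a set set" where
  "doubletons P = {{u, v} | u v. u \<in> P \<and> v \<in> P \<and> u \<noteq> v}"

definition edge_rel :: "'a set set \<Rightarrow> ('a \<times> 'a) set" where
  "edge_rel T = {(x, y). {x, y} \<in> T}"

lemma finite_doubletons:
  assumes "finite P"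
  shows "finite (doubletons P)"
proof (rule finite_subset)
  show "doubletons P \<subseteq> (\<lambda>(u, v). {u, v}) ` (P \<times> P)" by (auto simp: doubletons_def)
qed (use assms in simp)

lemma doubletonsE:
  assumes "e \<in> doubletons P"
  obtains u v where "e = {u, v}" "u \<in> P" "v \<in> P" "u \<noteq> v"
  using assms by (auto simp: doubletons_def)

lemma total_length_nonneg: "T \<subseteq> doubletons P \<Longrightarrow> 0 \<le> total_length T"
  unfolding total_length_def
  by (rule sum_nonneg) (auto elim!: doubletonsE simp: diameter_doubleton)

lemma total_length_mono:
  assumes "finite T" "T \<subseteq> doubletons P" "F \<subseteq> T"
  shows "total_length F \<le> total_length T"
  unfolding total_length_def
  by (rule sum_mono2) (use assms in \<open>auto elim!: doubletonsE simp: diameter_doubleton\<close>)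

lemma total_length_insert:
  "finite F \<Longrightarrow> {x, y} \<notin> F \<Longrightarrow> total_length (insert {x, y} F) = dist x y + total_length F"
  by (simp add: total_length_def diameter_doubleton)

lemma exists_net:
  fixes Q :: "'a::metric_space set"
  assumes "finite Q" "r > 0"
  shows "\<exists>N\<subseteq>Q. (\<forall>x\<in>N. \<forall>y\<in>N. x \<noteq> y \<longrightarrow> r \<le> dist x y) \<and> (\<forall>p\<in>Q. \<exists>n\<in>N. dist p n < r)"
  using assms(1)
proof (induction rule: finite_induct)
  case empty
  show ?case by auto
next
  case (insert x F)
  then obtain N where N: "N \<subseteq> F" "\<forall>x\<in>N. \<forall>y\<in>N. x \<noteq> y \<longrightarrow> r \<le> dist x y"
    "\<forall>p\<in>F. \<exists>n\<in>N. dist p n < r" by auto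
  show ?case
  proof (cases "\<exists>n\<in>N. dist x n < r")
    case True
    then show ?thesis using N by (intro exI[of _ N]) auto
  next
    case False
    then show ?thesis using N assms(2) by (intro exI[of _ "insert x N"]) (auto simp: dist_commute)
  qed
qed

lemma disjoint_family_on_balls_of_separated:
  assumes "\<forall>x\<in>N. \<forall>y\<in>N. x \<noteq> y \<longrightarrow> r \<le> dist x y"
  shows "disjoint_family_on (\<lambda>x. ball x (r / 2)) N"
  unfolding disjoint_family_on_def
proof (intro ballI impI)
  fix x y assume "x \<in> N" "y \<in> N" "x \<noteq> y"
  then have "r \<le> dist x y" using assms by blast
  then have "\<not> (dist x z < r / 2 \<and> dist y z < r / 2)" for z
    using dist_triangle_half_l[of x z r y] by linarith
  then show "ball x (r / 2) \<inter> ball y (r / 2) = {}" by (meson disjoint_iff mem_ball)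
qed

lemma card_separated_in_cball_le:
  fixes a :: "'a::euclidean_space"
  assumes fin: "finite N" and sub: "N \<subseteq> cball a R" and r: "r > 0" and R: "R \<ge> 0"
    and sep: "\<forall>x\<in>N. \<forall>y\<in>N. x \<noteq> y \<longrightarrow> r \<le> dist x y"
  shows "real (card N) \<le> ((2 * R + r) / r) ^ DIM('a)"
proof -
  define h where "h = r / 2"
  have h: "h > 0" using r by (simp add: h_def)
  define V where "V = unit_ball_vol (real DIM('a))"
  have V: "V > 0" by (simp add: V_def)
  \<comment> \<open>Volume argument: the balls of radius r/2 around N are disjoint and lie in a ball of radius R + r/2.\<close>
  have disj: "disjoint_family_on (\<lambda>x. ball x h) N"
    using disjoint_family_on_balls_of_separated[OF sep] by (simp add: h_def)
  have "measure lborel (\<Union>x\<in>N. ball x h) = (\<Sum>x\<in>N. measure lborel (ball x h))"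
    by (rule measure_finite_Union[OF fin]) (use h in \<open>auto simp: disj emeasure_ball\<close>)
  also have "\<dots> = real (card N) * (V * h ^ DIM('a))"
    using h by (simp add: content_ball V_def)
  finally have union: "measure lborel (\<Union>x\<in>N. ball x h) = real (card N) * (V * h ^ DIM('a))" .
  have "(\<Union>x\<in>N. ball x h) \<subseteq> ball a (R + h)"
  proof
    fix z assume "z \<in> (\<Union>x\<in>N. ball x h)"
    then obtain x where "x \<in> N" "dist x z < h" by auto
    moreover have "dist a x \<le> R" using sub \<open>x \<in> N\<close> by auto
    ultimately show "z \<in> ball a (R + h)" using dist_triangle[of a z x] by auto
  qed
  then have "measure lborel (\<Union>x\<in>N. ball x h) \<le> measure lborel (ball a (R + h))"
    using h R by (intro measure_mono_fmeasurable)
      (auto simp: fmeasurable_def emeasure_ball less_top[symmetric] intro!: borel_open)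
  also have "\<dots> = V * (R + h) ^ DIM('a)" using h R by (simp add: content_ball V_def)
  finally have "real (card N) * h ^ DIM('a) * V \<le> (R + h) ^ DIM('a) * V"
    using union by (simp add: algebra_simps)
  then have "real (card N) \<le> (R + h) ^ DIM('a) / h ^ DIM('a)"
    using V h by (simp add: field_simps)
  also have "\<dots> = ((2 * R + r) / r) ^ DIM('a)" by (simp add: h_def power_divide field_simps)
  finally show ?thesis .
qed

lemma card_close_pairs_le:
  fixes N :: "'a::euclidean_space set"
  assumes fin: "finite N" and r: "r > 0" and R: "R \<ge> 0"
    and sep: "\<forall>x\<in>N. \<forall>y\<in>N. x \<noteq> y \<longrightarrow> r \<le> dist x y"
  shows "real (card (SIGMA a:N. {b \<in> N. dist a b \<le> R})) \<le> real (card N) * ((2 * R + r) / r) ^ DIM('a)"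
proof -
  have "real (card (SIGMA a:N. {b \<in> N. dist a b \<le> R})) = (\<Sum>a\<in>N. real (card {b \<in> N. dist a b \<le> R}))"
    using fin by (simp add: card_SigmaI)
  also have "\<dots> \<le> (\<Sum>a\<in>N. ((2 * R + r) / r) ^ DIM('a))"
    by (intro sum_mono card_separated_in_cball_le) (use fin r R sep in auto)
  finally show ?thesis by simp
qed

lemma dist_le_total_length:
  fixes T :: "'a::euclidean_space set set"
  assumes "finite T" "T \<subseteq> doubletons P" "(u, v) \<in> (edge_rel T)\<^sup>*"
  shows "dist u v \<le> total_length T"
proof -
  \<comment> \<open>Track the edges used so far, so that an edge traversed twice is paid for only once.\<close>
  have "\<exists>F\<subseteq>T. y \<in> insert u (\<Union>F) \<and> (\<forall>w\<in>insert u (\<Union>F). dist u w \<le> total_length F)"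
    if "(u, y) \<in> (edge_rel T)\<^sup>*" for y
    using that
  proof (induction rule: rtrancl_induct)
    case base
    show ?case by (intro exI[of _ "{}"]) (simp add: total_length_def)
  next
    case (step y z)
    then obtain F where F: "F \<subseteq> T" "y \<in> insert u (\<Union>F)"
      and near: "\<forall>w\<in>insert u (\<Union>F). dist u w \<le> total_length F" by blast
    have yz: "{y, z} \<in> T" using step.hyps(2) by (simp add: edge_rel_def)
    show ?case
    proof (cases "{y, z} \<in> F")
      case True
      then show ?thesis using F near by blast
    next
      case False
      have finF: "finite F" using F(1) assms(1) finite_subset by blast
      have len: "total_length (insert {y, z} F) = dist y z + total_length F"
        by (rule total_length_insert[OF finF False])
      have "dist u w \<le> total_length (insert {y, z} F)" if w: "w \<in> insert u (\<Union>(insert {y, z} F))" for w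
      proof -
        have "dist u w \<le> total_length F + dist y z"
        proof (cases "w = z")
          case True
          have "dist u y \<le> total_length F" using F(2) near by blast
          then show ?thesis using True dist_triangle[of u z y] by (simp add: dist_commute)
        next
          case False
          then have "w \<in> insert u (\<Union>F)" using w F(2) by auto
          then have "dist u w \<le> total_length F" using near by blast
          then show ?thesis by (simp add: add_increasing2)
        qed
        then show ?thesis using len by simp
      qed
      then show ?thesis using F(1) yz by (intro exI[of _ "insert {y, z} F"]) auto
    qed
  qed
  from this[OF assms(3)] obtain F where F: "F \<subseteq> T" "dist u v \<le> total_length F" by blast
  with total_length_mono[OF assms(1,2) F(1)] show ?thesis by linarith
qed

lemma rtrancl_edge_rel_exit:
  assumes "(n, m) \<in> (edge_rel T)\<^sup>*" "n \<in> A" "m \<notin> A"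
  shows "\<exists>z. z \<notin> A \<and> (n, z) \<in> (edge_rel {e \<in> T. e \<inter> A \<noteq> {}})\<^sup>*"
proof -
  let ?R = "edge_rel {e \<in> T. e \<inter> A \<noteq> {}}"
  have "(\<exists>z. z \<notin> A \<and> (n, z) \<in> ?R\<^sup>*) \<or> (y \<in> A \<and> (n, y) \<in> ?R\<^sup>*)"
    if "(n, y) \<in> (edge_rel T)\<^sup>*" for y
    using that
  proof (induction rule: rtrancl_induct)
    case base
    then show ?case using assms(2) by simp
  next
    case (step y z)
    from step.IH show ?case
    proof (elim disjE conjE)
      assume "y \<in> A" "(n, y) \<in> ?R\<^sup>*"
      moreover have "(y, z) \<in> ?R" using step.hyps(2) \<open>y \<in> A\<close> by (auto simp: edge_rel_def)
      ultimately have "(n, z) \<in> ?R\<^sup>*" by simp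
      then show ?case by blast
    qed blast
  qed
  then show ?thesis using assms(1,3) by blast
qed

lemma total_length_edges_meeting_ball:
  fixes T :: "'a::euclidean_space set set"
  assumes "finite T" "T \<subseteq> doubletons P" "(n, m) \<in> (edge_rel T)\<^sup>*" "\<rho> \<le> dist n m"
  shows "\<rho> \<le> total_length {e \<in> T. e \<inter> ball n \<rho> \<noteq> {}}"
proof (cases "\<rho> > 0")
  case True
  let ?F = "{e \<in> T. e \<inter> ball n \<rho> \<noteq> {}}"
  have "n \<in> ball n \<rho>" "m \<notin> ball n \<rho>" using True assms(4) by auto
  then obtain z where z: "z \<notin> ball n \<rho>" "(n, z) \<in> (edge_rel ?F)\<^sup>*"
    using rtrancl_edge_rel_exit[OF assms(3)] by blast
  have "\<rho> \<le> dist n z" using z(1) by simp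
  also have "\<dots> \<le> total_length ?F"
    by (rule dist_le_total_length[OF _ _ z(2)]) (use assms(1,2) in auto)
  finally show ?thesis .
next
  case False
  have "{e \<in> T. e \<inter> ball n \<rho> \<noteq> {}} \<subseteq> doubletons P" using assms(2) by blast
  then have "0 \<le> total_length {e \<in> T. e \<inter> ball n \<rho> \<noteq> {}}" by (rule total_length_nonneg)
  with False show ?thesis by linarith
qed

lemma sum_edges_meeting_disjoint_le:
  fixes w :: "'a set \<Rightarrow> real"
  assumes finT: "finite T" and TP: "T \<subseteq> doubletons P" and finN: "finite N"
    and disj: "disjoint_family_on A N" and w: "\<And>e. e \<in> T \<Longrightarrow> 0 \<le> w e"
  shows "(\<Sum>n\<in>N. \<Sum>e\<in>{e \<in> T. e \<inter> A n \<noteq> {}}. w e) \<le> 2 * (\<Sum>e\<in>T. w e)"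
proof -
  have card_le: "card {n \<in> N. e \<inter> A n \<noteq> {}} \<le> 2" if e: "e \<in> T" for e
  proof -
    obtain u v where uv: "e = {u, v}" using e TP by (blast elim: doubletonsE)
    have "\<forall>n\<in>{n \<in> N. e \<inter> A n \<noteq> {}}. \<exists>x. x \<in> e \<inter> A n" by blast
    then obtain pick where pick: "\<And>n. n \<in> {n \<in> N. e \<inter> A n \<noteq> {}} \<Longrightarrow> pick n \<in> e \<inter> A n"
      by metis
    have "inj_on pick {n \<in> N. e \<inter> A n \<noteq> {}}"
    proof (rule inj_onI)
      fix n n' assume "n \<in> {n \<in> N. e \<inter> A n \<noteq> {}}" "n' \<in> {n \<in> N. e \<inter> A n \<noteq> {}}" "pick n = pick n'"
      then have "n \<in> N" "n' \<in> N" "A n \<inter> A n' \<noteq> {}" using pick[of n] pick[of n'] by auto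
      then show "n = n'" using disj by (meson disjoint_family_onD)
    qed
    then have "card {n \<in> N. e \<inter> A n \<noteq> {}} \<le> card e"
      by (rule card_inj_on_le) (use pick uv in blast)+
    also have "\<dots> \<le> 2" using uv by (simp add: card_insert_if)
    finally show ?thesis .
  qed
  have "(\<Sum>n\<in>N. \<Sum>e\<in>{e \<in> T. e \<inter> A n \<noteq> {}}. w e)
        = (\<Sum>n\<in>N. \<Sum>e\<in>T. if e \<inter> A n \<noteq> {} then w e else 0)"
    using finT by (simp add: sum.inter_filter)
  also have "\<dots> = (\<Sum>e\<in>T. \<Sum>n\<in>N. if e \<inter> A n \<noteq> {} then w e else 0)"
    by (rule sum.swap)
  also have "\<dots> = (\<Sum>e\<in>T. w e * card {n \<in> N. e \<inter> A n \<noteq> {}})"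
    using finN by (simp add: sum.inter_filter[symmetric] mult.commute)
  also have "\<dots> \<le> (\<Sum>e\<in>T. w e * 2)"
    using card_le w by (intro sum_mono mult_left_mono) auto
  also have "\<dots> = 2 * (\<Sum>e\<in>T. w e)" by (metis sum_distrib_right mult.commute)
  finally show ?thesis .
qed

lemma card_separated_le_total_length:
  fixes T :: "'a::euclidean_space set set"
  assumes finT: "finite T" and TP: "T \<subseteq> doubletons P"
    and conn: "\<forall>u\<in>P. \<forall>v\<in>P. (u, v) \<in> (edge_rel T)\<^sup>*"
    and NP: "N \<subseteq> P" and finN: "finite N" and r: "r > 0"
    and sep: "\<forall>x\<in>N. \<forall>y\<in>N. x \<noteq> y \<longrightarrow> r \<le> dist x y"
  shows "real (card N) * r \<le> r + 4 * total_length T"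
proof (cases "card N \<le> 1")
  case True
  then have "real (card N) * r \<le> r" using r by (simp add: mult_le_cancel_right1)
  then show ?thesis using total_length_nonneg[OF TP] by linarith
next
  case False
  have meet: "r / 2 \<le> total_length {e \<in> T. e \<inter> ball n (r / 2) \<noteq> {}}" if n: "n \<in> N" for n
  proof -
    obtain m where m: "m \<in> N" "m \<noteq> n"
      using False n by (metis card_le_Suc0_iff_eq finN One_nat_def)
    have "r / 2 \<le> dist n m" using sep m n r by force
    moreover have "(n, m) \<in> (edge_rel T)\<^sup>*" using conn NP n m by blast
    ultimately show ?thesis using total_length_edges_meeting_ball[OF finT TP] by blast
  qed
  have disj: "disjoint_family_on (\<lambda>n. ball n (r / 2)) N"
    by (rule disjoint_family_on_balls_of_separated[OF sep])
  have "real (card N) * (r / 2) = (\<Sum>n\<in>N. r / 2)" by simp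
  also have "\<dots> \<le> (\<Sum>n\<in>N. \<Sum>e\<in>{e \<in> T. e \<inter> ball n (r / 2) \<noteq> {}}. diameter e)"
    using meet by (intro sum_mono) (simp add: total_length_def)
  also have "\<dots> \<le> 2 * total_length T"
    unfolding total_length_def
    by (rule sum_edges_meeting_disjoint_le[OF finT TP finN disj])
       (use TP in \<open>auto elim!: doubletonsE simp: diameter_doubleton\<close>)
  finally show ?thesis using r by simp
qed

definition edge_close :: "real \<Rightarrow> 'a::metric_space set \<Rightarrow> 'a set \<Rightarrow> bool" where
  "edge_close c e e' \<longleftrightarrow> (\<exists>p q p' q'. e = {p, q} \<and> e' = {p', q'} \<and>
      dist p p' \<le> dist p' q' / c \<and> dist q q' \<le> dist p' q' / c)"

definition no_mutually_close_edges :: "real \<Rightarrow> 'a::metric_space set set \<Rightarrow> bool" where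
  "no_mutually_close_edges c E \<longleftrightarrow>
     (\<forall>e\<in>E. \<forall>e'\<in>E. e \<noteq> e' \<longrightarrow> \<not> (edge_close c e e' \<and> edge_close c e' e))"

lemma blocked_iff_edge_close: "blocked s E p q \<longleftrightarrow> (\<exists>e\<in>E. edge_close (2 * s + 2) {p, q} e)"
proof
  show "blocked s E p q \<Longrightarrow> \<exists>e\<in>E. edge_close (2 * s + 2) {p, q} e"
    unfolding blocked_def edge_close_def by blast
next
  assume "\<exists>e\<in>E. edge_close (2 * s + 2) {p, q} e"
  then obtain a b p' q' where ab: "{p, q} = {a, b}" and e: "{p', q'} \<in> E"
    and close: "dist a p' \<le> dist p' q' / (2 * s + 2)" "dist b q' \<le> dist p' q' / (2 * s + 2)"
    unfolding edge_close_def by blast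
  from ab consider "a = p" "b = q" | "a = q" "b = p" by (auto simp: doubleton_eq_iff)
  then show "blocked s E p q"
  proof cases
    case 1
    then show ?thesis using e close unfolding blocked_def by blast
  next
    case 2
    have "{q', p'} \<in> E" using e by (simp add: insert_commute)
    then show ?thesis using 2 close unfolding blocked_def by (metis dist_commute)
  qed
qed

lemma no_mutually_close_edges_process_pair:
  assumes "no_mutually_close_edges (2 * s + 2) E"
  shows "no_mutually_close_edges (2 * s + 2) (process_pair s E pq)"
proof (cases "blocked s E (fst pq) (snd pq)")
  case True
  then show ?thesis using assms by (simp add: process_pair_def)
next
  case False
  then have "\<forall>e\<in>E. \<not> edge_close (2 * s + 2) {fst pq, snd pq} e"
    by (simp add: blocked_iff_edge_close)
  then show ?thesis using False assms
    unfolding no_mutually_close_edges_def process_pair_def by auto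
qed

lemma no_mutually_close_edges_uncoord_graph:
  "no_mutually_close_edges (2 * s + 2) (uncoord_graph s ord)"
proof -
  have foldl: "no_mutually_close_edges (2 * s + 2) (foldl (process_pair s) E ord)"
    if "no_mutually_close_edges (2 * s + 2) E" for E
    using that by (induction ord arbitrary: E) (simp_all add: no_mutually_close_edges_process_pair)
  show ?thesis unfolding uncoord_graph_def by (rule foldl) (simp add: no_mutually_close_edges_def)
qed

lemma uncoord_graph_subset_doubletons:
  assumes "valid_order P ord"
  shows "uncoord_graph s ord \<subseteq> doubletons P"
proof -
  have foldl: "foldl (process_pair s) E ord \<subseteq> E \<union> (\<lambda>pq. {fst pq, snd pq}) ` set ord" for E
  proof (induction ord arbitrary: E)
    case Nil
    show ?case by simp
  next
    case (Cons pq ord)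
    have "process_pair s E pq \<subseteq> insert {fst pq, snd pq} E" by (auto simp: process_pair_def)
    with Cons.IH[of "process_pair s E pq"] show ?case by auto
  qed
  have "(\<lambda>pq. {fst pq, snd pq}) ` set ord \<subseteq> doubletons P"
    using assms by (auto simp: valid_order_def doubletons_def)
  with foldl[of "{}"] show ?thesis by (simp add: uncoord_graph_def)
qed

lemma edge_close_of_near_map:
  assumes "\<forall>p\<in>P. dist p (f p) < r" and "2 * r \<le> dist p' q' / c"
    and "p \<in> P" "q \<in> P" "p' \<in> P" "q' \<in> P" "f p = f p'" "f q = f q'"
  shows "edge_close c {p, q} {p', q'}"
proof -
  have near: "dist x (f x) < r" if "x \<in> P" for x using assms(1) that by blast
  have "dist p p' \<le> dist p (f p) + dist p' (f p')" "dist q q' \<le> dist q (f q) + dist q' (f q')"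
    using dist_triangle[of p p' "f p'"] dist_triangle[of q q' "f q'"] assms(7,8) by (simp_all add: dist_commute)
  then have "dist p p' < 2 * r" "dist q q' < 2 * r"
    using near[OF assms(3)] near[OF assms(4)] near[OF assms(5)] near[OF assms(6)] by linarith+
  with assms(2) show ?thesis unfolding edge_close_def by fastforce
qed

lemma inj_on_image_near_map:
  assumes GP: "G \<subseteq> doubletons P" and G: "no_mutually_close_edges c G" and c: "c > 0"
    and f: "\<forall>p\<in>P. dist p (f p) < r" and rL: "2 * r \<le> L / c"
  shows "inj_on (image f) {e \<in> G. L \<le> diameter e}"
proof (rule inj_onI, rule ccontr)
  fix e e' assume e: "e \<in> {e \<in> G. L \<le> diameter e}" and e': "e' \<in> {e \<in> G. L \<le> diameter e}"
    and eq: "f ` e = f ` e'" and ne: "e \<noteq> e'"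
  obtain p q where pq: "e = {p, q}" "p \<in> P" "q \<in> P" using e GP by (blast elim: doubletonsE)
  obtain p' q' where pq': "e' = {p', q'}" "p' \<in> P" "q' \<in> P" using e' GP by (blast elim: doubletonsE)
  have "L / c \<le> dist p q / c" "L / c \<le> dist p' q' / c"
    using e e' pq pq' c by (auto simp: diameter_doubleton intro!: divide_right_mono)
  then have scale: "2 * r \<le> dist p q / c" "2 * r \<le> dist p' q' / c" "2 * r \<le> dist q' p' / c"
    using rL by (simp_all add: dist_commute)
  from eq consider "f p = f p'" "f q = f q'" | "f p = f q'" "f q = f p'"
    using pq pq' by (auto simp: doubleton_eq_iff)
  then have "edge_close c e e' \<and> edge_close c e' e"
  proof cases
    case 1
    then show ?thesis using pq pq' scale f edge_close_of_near_map[of P f r] by metis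
  next
    case 2
    have "e' = {q', p'}" using pq' by auto
    then show ?thesis using 2 pq pq' scale f edge_close_of_near_map[of P f r] by metis
  qed
  then show False using G e e' ne unfolding no_mutually_close_edges_def by blast
qed

lemma card_edges_at_scale_le:
  fixes G :: "'a::euclidean_space set set"
  assumes finP: "finite P" and GP: "G \<subseteq> doubletons P" and G: "no_mutually_close_edges c G"
    and c: "c > 0" and L: "L > 0" and NP: "N \<subseteq> P"
    and sep: "\<forall>x\<in>N. \<forall>y\<in>N. x \<noteq> y \<longrightarrow> L / (2 * c) \<le> dist x y"
    and cover: "\<forall>p\<in>P. \<exists>n\<in>N. dist p n < L / (2 * c)"
  shows "real (card {e \<in> G. L \<le> diameter e \<and> diameter e < 2 * L}) \<le> real (card N) * (8 * c + 5) ^ DIM('a)"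
proof -
  define r where "r = L / (2 * c)"
  have r: "r > 0" using c L by (simp add: r_def)
  obtain f where f: "\<forall>p\<in>P. f p \<in> N \<and> dist p (f p) < r"
    using cover unfolding r_def by metis
  define EL where "EL = {e \<in> G. L \<le> diameter e \<and> diameter e < 2 * L}"
  define R where "R = 2 * L + 2 * r"
  define S where "S = (SIGMA a:N. {b \<in> N. dist a b \<le> R})"
  have finN: "finite N" using finP NP finite_subset by blast
  have "inj_on (image f) {e \<in> G. L \<le> diameter e}"
    by (rule inj_on_image_near_map[OF GP G c]) (use f c in \<open>auto simp: r_def\<close>)
  then have inj: "inj_on (image f) EL" by (rule inj_on_subset) (auto simp: EL_def)
  have img: "image f ` EL \<subseteq> (\<lambda>(a, b). {a, b}) ` S"
  proof
    fix x assume "x \<in> image f ` EL"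
    then obtain p q where pq: "x = {f p, f q}" "p \<in> P" "q \<in> P" "dist p q < 2 * L"
      using GP by (auto simp: EL_def diameter_doubleton elim!: doubletonsE)
    have "dist (f p) (f q) \<le> dist (f p) p + dist p q + dist q (f q)"
      using dist_triangle[of "f p" "f q" p] dist_triangle[of p "f q" q] by linarith
    moreover have "dist (f p) p < r" "dist q (f q) < r" using f pq by (auto simp: dist_commute)
    ultimately have "dist (f p) (f q) \<le> R" using pq(4) unfolding R_def by linarith
    then have "(f p, f q) \<in> S" using f pq by (simp add: S_def)
    then show "x \<in> (\<lambda>(a, b). {a, b}) ` S" using pq by force
  qed
  have finS: "finite S" using finN by (simp add: S_def)
  have "card EL = card (image f ` EL)" using card_image[OF inj] by simp
  also have "\<dots> \<le> card ((\<lambda>(a, b). {a, b}) ` S)" by (rule card_mono) (use finS img in auto)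
  also have "\<dots> \<le> card S" by (rule card_image_le[OF finS])
  finally have "card EL \<le> card S" .
  then have "real (card EL) \<le> real (card N) * ((2 * R + r) / r) ^ DIM('a)"
    using card_close_pairs_le[OF finN r _ sep[folded r_def], of R] L r
    unfolding S_def by (simp add: R_def)
  also have "(2 * R + r) / r = 8 * c + 5"
    using c L by (simp add: R_def r_def field_simps)
  finally show ?thesis by (simp add: EL_def)
qed

lemma card_edges_at_scale_mult_le:
  fixes G T :: "'a::euclidean_space set set"
  assumes finP: "finite P" and GP: "G \<subseteq> doubletons P" and G: "no_mutually_close_edges (2 * s + 2) G"
    and s: "s > 1" and L: "L > 0"
    and finT: "finite T" and TP: "T \<subseteq> doubletons P"
    and conn: "\<forall>u\<in>P. \<forall>v\<in>P. (u, v) \<in> (edge_rel T)\<^sup>*"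
  shows "real (card {e \<in> G. L \<le> diameter e \<and> diameter e < 2 * L}) * L
           \<le> (37 * s) ^ DIM('a) * (L + 16 * (s + 1) * total_length T)"
proof -
  define r where "r = L / (2 * (2 * s + 2))"
  have r: "r > 0" using s L by (simp add: r_def)
  obtain N where N: "N \<subseteq> P" "\<forall>x\<in>N. \<forall>y\<in>N. x \<noteq> y \<longrightarrow> r \<le> dist x y" "\<forall>p\<in>P. \<exists>n\<in>N. dist p n < r"
    using exists_net[OF finP r] by blast
  have finN: "finite N" using N(1) finP finite_subset by blast
  have "real (card {e \<in> G. L \<le> diameter e \<and> diameter e < 2 * L}) \<le> real (card N) * (8 * (2 * s + 2) + 5) ^ DIM('a)"
    by (rule card_edges_at_scale_le[OF finP GP G _ L N(1)]) (use s N in \<open>auto simp: r_def\<close>)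
  also have "\<dots> \<le> real (card N) * (37 * s) ^ DIM('a)"
    using s by (intro mult_left_mono power_mono) auto
  finally have card_EL: "real (card {e \<in> G. L \<le> diameter e \<and> diameter e < 2 * L}) * L
                           \<le> (37 * s) ^ DIM('a) * (real (card N) * L)"
    using L by (simp add: mult_right_mono ac_simps)
  have r4: "(4 * s + 4) * r = L" using s by (simp add: r_def field_simps)
  have "real (card N) * L = (4 * s + 4) * (real (card N) * r)" by (simp add: r4[symmetric] ac_simps)
  also have "\<dots> \<le> (4 * s + 4) * (r + 4 * total_length T)"
    using card_separated_le_total_length[OF finT TP conn N(1) finN r N(2)] s
    by (intro mult_left_mono) auto
  also have "\<dots> = L + 16 * (s + 1) * total_length T" by (simp add: r4[symmetric] algebra_simps)
  finally have "(37 * s) ^ DIM('a) * (real (card N) * L)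
                  \<le> (37 * s) ^ DIM('a) * (L + 16 * (s + 1) * total_length T)"
    using s by (intro mult_left_mono) auto
  with card_EL show ?thesis by linarith
qed

lemma sum_edges_at_scale_le:
  fixes G T :: "'a::euclidean_space set set"
  assumes finP: "finite P" and GP: "G \<subseteq> doubletons P" and G: "no_mutually_close_edges (2 * s + 2) G"
    and s: "s > 1" and L: "L > 0"
    and finT: "finite T" and TP: "T \<subseteq> doubletons P"
    and conn: "\<forall>u\<in>P. \<forall>v\<in>P. (u, v) \<in> (edge_rel T)\<^sup>*"
  shows "(\<Sum>e\<in>{e \<in> G. L \<le> diameter e \<and> diameter e < 2 * L}. diameter e)
           \<le> 66 * 37 ^ DIM('a) * s ^ (DIM('a) + 1) * total_length T"
proof -
  define EL where "EL = {e \<in> G. L \<le> diameter e \<and> diameter e < 2 * L}"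
  define W where "W = total_length T"
  have W: "0 \<le> W" unfolding W_def by (rule total_length_nonneg[OF TP])
  show ?thesis
  proof (cases "EL = {}")
    case True
    then show ?thesis using s W unfolding EL_def[symmetric] W_def[symmetric] by simp
  next
    case False
    then obtain p q where pq: "{p, q} \<in> EL" "p \<in> P" "q \<in> P"
      using GP by (auto simp: EL_def elim!: doubletonsE)
    have "L \<le> dist p q" using pq by (simp add: EL_def diameter_doubleton)
    also have "\<dots> \<le> W" unfolding W_def
      by (rule dist_le_total_length[OF finT TP]) (use conn pq in blast)
    finally have LW: "L \<le> W" .
    have "(\<Sum>e\<in>EL. diameter e) \<le> (\<Sum>e\<in>EL. 2 * L)" by (rule sum_mono) (simp add: EL_def)
    also have "\<dots> = 2 * (real (card EL) * L)" by simp
    also have "\<dots> \<le> 2 * ((37 * s) ^ DIM('a) * (L + 16 * (s + 1) * W))"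
      using card_edges_at_scale_mult_le[OF assms] by (simp add: EL_def W_def)
    also have "\<dots> \<le> (37 * s) ^ DIM('a) * (66 * s * W)"
    proof -
      have "L \<le> s * W" "W \<le> s * W" using LW s W mult_right_mono[of 1 s W] by auto
      then have "2 * (L + 16 * (s + 1) * W) \<le> 66 * s * W" by (simp add: algebra_simps)
      then show ?thesis using s by (simp add: mult_left_mono)
    qed
    also have "\<dots> = 66 * 37 ^ DIM('a) * s ^ (DIM('a) + 1) * W"
      by (simp add: power_mult_distrib algebra_simps)
    finally show ?thesis by (simp add: EL_def W_def)
  qed
qed

lemma sum_le_dyadic_shells:
  fixes g :: "'b \<Rightarrow> real"
  assumes fin: "finite E" and \<delta>: "\<delta> > 0" and \<delta>D: "\<delta> \<le> D"
    and range: "\<And>e. e \<in> E \<Longrightarrow> \<delta> \<le> g e \<and> g e \<le> D"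
    and shell: "\<And>j::nat. (\<Sum>e\<in>{e \<in> E. \<delta> * 2 ^ j \<le> g e \<and> g e < 2 * (\<delta> * 2 ^ j)}. g e) \<le> B"
  shows "(\<Sum>e\<in>E. g e) \<le> (log 2 (D / \<delta>) + 1) * B"
proof -
  define k where "k e = nat \<lfloor>log 2 (g e / \<delta>)\<rfloor>" for e
  define K where "K = nat \<lfloor>log 2 (D / \<delta>)\<rfloor>"
  have in_shell: "\<delta> * 2 ^ k e \<le> g e \<and> g e < 2 * (\<delta> * 2 ^ k e)" if e: "e \<in> E" for e
  proof -
    have x: "1 \<le> g e / \<delta>" using range[OF e] \<delta> by simp
    then have "\<lfloor>log 2 (g e / \<delta>)\<rfloor> = int (k e)" by (simp add: k_def)
    then have "2 powr real (k e) \<le> g e / \<delta> \<and> g e / \<delta> < 2 powr (real (k e) + 1)"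
      using x by (subst (asm) floor_log_eq_powr_iff) auto
    then show ?thesis using \<delta> by (simp add: powr_realpow powr_add field_simps)
  qed
  have "k ` E \<subseteq> {..K}"
  proof
    fix j assume "j \<in> k ` E"
    then obtain e where e: "e \<in> E" "j = k e" by blast
    have "g e / \<delta> \<le> D / \<delta>" using range[OF e(1)] \<delta> by (simp add: divide_right_mono)
    moreover have "0 < g e / \<delta>" using range[OF e(1)] \<delta> by simp
    ultimately show "j \<in> {..K}" using e by (simp add: k_def K_def floor_mono nat_mono)
  qed
  then have "(\<Sum>e\<in>E. g e) = (\<Sum>j\<in>{..K}. \<Sum>e\<in>{e \<in> E. k e = j}. g e)"
    using sum.group[OF fin _ , of "{..K}" k g] by simp
  also have "\<dots> \<le> (\<Sum>j\<in>{..K}. B)"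
  proof (rule sum_mono)
    fix j
    have "(\<Sum>e\<in>{e \<in> E. k e = j}. g e) \<le> (\<Sum>e\<in>{e \<in> E. \<delta> * 2 ^ j \<le> g e \<and> g e < 2 * (\<delta> * 2 ^ j)}. g e)"
      by (rule sum_mono2) (use fin in_shell range \<delta> in \<open>auto intro: order_trans[OF less_imp_le[OF \<delta>]]\<close>)
    also have "\<dots> \<le> B" by (rule shell)
    finally show "(\<Sum>e\<in>{e \<in> E. k e = j}. g e) \<le> B" .
  qed
  also have "\<dots> = (real K + 1) * B" by simp
  also have "\<dots> \<le> (log 2 (D / \<delta>) + 1) * B"
  proof (rule mult_right_mono)
    have "0 \<le> log 2 (D / \<delta>)" using \<delta> \<delta>D by simp
    then show "real K + 1 \<le> log 2 (D / \<delta>) + 1" by (simp add: K_def)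
    have "0 \<le> (\<Sum>e\<in>{e \<in> E. \<delta> * 2 ^ 0 \<le> g e \<and> g e < 2 * (\<delta> * 2 ^ 0)}. g e)"
      using range \<delta> by (intro sum_nonneg) (auto intro: order_trans[OF less_imp_le[OF \<delta>]])
    then show "0 \<le> B" using shell[of 0] by linarith
  qed
  finally show ?thesis .
qed

lemma aspect_ratioE:
  fixes P :: "'a::euclidean_space set"
  assumes finP: "finite P" and two: "2 \<le> card P"
  obtains \<delta> D where "0 < \<delta>" "\<delta> \<le> D" "aspect_ratio P = D / \<delta>"
    "\<And>p q. p \<in> P \<Longrightarrow> q \<in> P \<Longrightarrow> p \<noteq> q \<Longrightarrow> \<delta> \<le> dist p q \<and> dist p q \<le> D"
proof -
  define dists where "dists = {dist u v | u v. u \<in> P \<and> v \<in> P}"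
  define pos_dists where "pos_dists = {dist u v | u v. u \<in> P \<and> v \<in> P \<and> u \<noteq> v}"
  have fin: "finite dists"
  proof -
    have "dists = (\<lambda>(u, v). dist u v) ` (P \<times> P)" by (auto simp: dists_def)
    then show ?thesis using finP by simp
  qed
  have sub: "pos_dists \<subseteq> dists" by (auto simp: dists_def pos_dists_def)
  obtain u v where uv: "u \<in> P" "v \<in> P" "u \<noteq> v"
    using two finP by (metis One_nat_def card_le_Suc0_iff_eq not_less_eq_eq numeral_2_eq_2)
  then have ne: "pos_dists \<noteq> {}" by (auto simp: pos_dists_def)
  have fin': "finite pos_dists" using fin sub finite_subset by blast
  have "Min pos_dists \<in> pos_dists" using Min_in[OF fin' ne] .
  then have pos: "0 < Min pos_dists" by (auto simp: pos_dists_def)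
  have bounds: "Min pos_dists \<le> dist p q \<and> dist p q \<le> Max dists"
    if "p \<in> P" "q \<in> P" "p \<noteq> q" for p q
    using that fin fin' by (auto simp: dists_def pos_dists_def intro!: Min_le Max_ge)
  show ?thesis
  proof (rule that[OF pos])
    show "Min pos_dists \<le> Max dists" using bounds[OF uv] by linarith
    show "aspect_ratio P = Max dists / Min pos_dists"
      by (simp add: aspect_ratio_def dists_def pos_dists_def)
  qed (rule bounds)
qed

lemma total_length_le_of_no_mutually_close_edges:
  fixes G T :: "'a::euclidean_space set set"
  assumes finP: "finite P" and two: "2 \<le> card P" and s: "s > 1"
    and GP: "G \<subseteq> doubletons P" and G: "no_mutually_close_edges (2 * s + 2) G"
    and finT: "finite T" and TP: "T \<subseteq> doubletons P"
    and conn: "\<forall>u\<in>P. \<forall>v\<in>P. (u, v) \<in> (edge_rel T)\<^sup>*"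
  shows "total_length G
           \<le> 132 * 37 ^ DIM('a) * max 1 (log 2 (aspect_ratio P)) * s ^ (DIM('a) + 1) * total_length T"
proof -
  obtain \<delta> D where \<delta>: "0 < \<delta>" "\<delta> \<le> D" and ratio: "aspect_ratio P = D / \<delta>"
    and bounds: "\<And>p q. p \<in> P \<Longrightarrow> q \<in> P \<Longrightarrow> p \<noteq> q \<Longrightarrow> \<delta> \<le> dist p q \<and> dist p q \<le> D"
    using aspect_ratioE[OF finP two] by blast
  define B where "B = 66 * 37 ^ DIM('a) * s ^ (DIM('a) + 1) * total_length T"
  have finG: "finite G" using GP finite_doubletons[OF finP] finite_subset by blast
  have range: "\<delta> \<le> diameter e \<and> diameter e \<le> D" if "e \<in> G" for e
    using that GP bounds by (auto simp: diameter_doubleton elim!: doubletonsE)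
  have shell: "(\<Sum>e\<in>{e \<in> G. \<delta> * 2 ^ j \<le> diameter e \<and> diameter e < 2 * (\<delta> * 2 ^ j)}. diameter e) \<le> B"
    for j :: nat
    unfolding B_def by (rule sum_edges_at_scale_le[OF finP GP G s _ finT TP conn]) (use \<delta> in simp)
  have "total_length G \<le> (log 2 (D / \<delta>) + 1) * B"
    unfolding total_length_def by (rule sum_le_dyadic_shells[OF finG \<delta> range shell])
  also have "\<dots> \<le> (2 * max 1 (log 2 (aspect_ratio P))) * B"
    using s total_length_nonneg[OF TP] by (intro mult_right_mono) (auto simp: ratio B_def)
  finally show ?thesis by (simp add: B_def mult_ac)
qed

lemma spanning_tree_star:
  assumes "p0 \<in> P" "finite P"
  shows "spanning_tree P ((\<lambda>v. {p0, v}) ` (P - {p0}))"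
proof -
  define T where "T = (\<lambda>v. {p0, v}) ` (P - {p0})"
  have "inj_on (\<lambda>v. {p0, v}) (P - {p0})"
    by (rule inj_onI) (auto simp: doubleton_eq_iff)
  then have card: "card T = card P - 1"
    using assms by (simp add: T_def card_image card_Diff_singleton)
  have to_root: "(u, p0) \<in> (edge_rel T)\<^sup>*" "(p0, u) \<in> (edge_rel T)\<^sup>*" if "u \<in> P" for u
  proof -
    have "u = p0 \<or> ({u, p0} \<in> T \<and> {p0, u} \<in> T)" using that by (auto simp: T_def insert_commute)
    then show "(u, p0) \<in> (edge_rel T)\<^sup>*" "(p0, u) \<in> (edge_rel T)\<^sup>*" by (auto simp: edge_rel_def)
  qed
  have "\<forall>u\<in>P. \<forall>v\<in>P. (u, v) \<in> (edge_rel T)\<^sup>*"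
    using to_root by (meson rtrancl_trans)
  then show ?thesis using card assms(1)
    by (auto simp: spanning_tree_def T_def edge_rel_def)
qed

lemma le_mult_mst_weight:
  assumes "P \<noteq> {}" "finite P" "K > 0" and bound: "\<And>T. spanning_tree P T \<Longrightarrow> x \<le> K * total_length T"
  shows "x \<le> K * mst_weight P"
proof -
  obtain p0 where "p0 \<in> P" using assms(1) by blast
  then have ne: "{total_length T | T. spanning_tree P T} \<noteq> {}"
    using spanning_tree_star[OF _ assms(2)] by blast
  have "x / K \<le> mst_weight P"
    unfolding mst_weight_def
    by (rule cInf_greatest[OF ne]) (use bound assms(3) in \<open>auto simp: pos_divide_le_eq mult.commute\<close>)
  then show ?thesis using assms(3) by (simp add: pos_divide_le_eq mult.commute)
qed

theorem theorem11:
  shows "\<exists>C>0. \<forall>(P :: 'a::euclidean_space set) (s :: real) ord.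
           finite P \<and> 2 \<le> card P \<and> s > 1 \<and> valid_order P ord \<longrightarrow>
           total_length (uncoord_graph s ord)
             \<le> C * max 1 (log 2 (aspect_ratio P)) * mst_weight P * s ^ (DIM('a) + 1)"
proof (intro exI[of _ "132 * 37 ^ DIM('a)"] conjI allI impI)
  fix P :: "'a set" and s :: real and ord
  assume "finite P \<and> 2 \<le> card P \<and> s > 1 \<and> valid_order P ord"
  then have finP: "finite P" and two: "2 \<le> card P" and s: "s > 1" and ord: "valid_order P ord"
    by auto
  define K where "K = 132 * 37 ^ DIM('a) * max 1 (log 2 (aspect_ratio P)) * s ^ (DIM('a) + 1)"
  have "total_length (uncoord_graph s ord) \<le> K * mst_weight P"
  proof (rule le_mult_mst_weight)
    show "P \<noteq> {}" "K > 0" using two s by (auto simp: K_def)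
    fix T assume "spanning_tree P T"
    then have TP: "T \<subseteq> doubletons P" and conn: "\<forall>u\<in>P. \<forall>v\<in>P. (u, v) \<in> (edge_rel T)\<^sup>*"
      by (auto simp: spanning_tree_def doubletons_def edge_rel_def)
    have finT: "finite T" using TP finite_doubletons[OF finP] finite_subset by blast
    show "total_length (uncoord_graph s ord) \<le> K * total_length T"
      using total_length_le_of_no_mutually_close_edges[OF finP two s
          uncoord_graph_subset_doubletons[OF ord] no_mutually_close_edges_uncoord_graph finT TP conn]
      by (simp add: K_def)
  qed (use finP in simp)
  then show "total_length (uncoord_graph s ord)
               \<le> 132 * 37 ^ DIM('a) * max 1 (log 2 (aspect_ratio P)) * mst_weight P * s ^ (DIM('a) + 1)"
    by (simp add: K_def ac_simps)
qed simp

end
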